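(* The set $\mathcal{A}$ is a convex subset of $\mathbb{P}(\mathbb{Z}^+)$. For any $F_1,F_2\in\mathcal{A}$ and $G\in\mathbb{P}(\mathbb{Z}^+)$, one has $F_1*F_2\in\mathcal{A}$ and $\sum_{k\ge0}F_1(k)G^{(k)}\in\mathcal{A}$.
   Context: $\mathbb{P}(\mathbb{Z}^+)$ is the set of functions $F:\mathbb{Z}\to[0,1]$ with $\sum_kF(k)=1$ and $F(k)=0$ for $k<0$. $*$ denotes convolution $(F_1*F_2)(m)=\sum_kF_1(k)F_2(m-k)$, $G^{(k)}$ is the $k$-th convolution power with $G^{(0)}=\delta_0$ (point mass at $0$). $\mathcal{A}=\{F\in\mathbb{P}(\mathbb{Z}^+):\sup_{n\in\mathbb{N}}n\sum_{k}|F^{(n)}(k)-F^{(n+1)}(k)|<\infty\}$. *)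

theory Defs
  imports "HOL-Analysis.Analysis"
begin

definition PZ :: "(int \<Rightarrow> real) set" where
  "PZ = {F. (\<forall>k. 0 \<le> F k \<and> F k \<le> 1) \<and> (F has_sum 1) UNIV \<and> (\<forall>k<0. F k = 0)}"

definition conv :: "(int \<Rightarrow> real) \<Rightarrow> (int \<Rightarrow> real) \<Rightarrow> (int \<Rightarrow> real)" (infixl "\<star>" 70) where
  "conv F1 F2 = (\<lambda>m. \<Sum>\<^sub>\<infinity>k\<in>UNIV. F1 k * F2 (m - k))"

definition delta0 :: "int \<Rightarrow> real" where
  "delta0 = (\<lambda>k. if k = 0 then 1 else 0)"

primrec conv_pow :: "(int \<Rightarrow> real) \<Rightarrow> nat \<Rightarrow> (int \<Rightarrow> real)" where
  "conv_pow G 0 = delta0"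
| "conv_pow G (Suc n) = G \<star> conv_pow G n"

definition classA :: "(int \<Rightarrow> real) set" where
  "classA = {F \<in> PZ. \<exists>C::real. \<forall>n::nat.
      real n * (\<Sum>\<^sub>\<infinity>k\<in>UNIV. \<bar>conv_pow F n k - conv_pow F (Suc n) k\<bar>) \<le> C}"

end

theory Submission
  imports Defs "HOL-Computational_Algebra.Formal_Power_Series"
begin

text \<open>
  Pass to generating functions: \<open>F\<close> becomes a power series \<open>P\<close> with nonnegative coefficients
  summing to 1, convolution becomes multiplication, and the defining quantity of \<open>classA\<close>
  becomes \<open>n \<parallel>P^n - P^(n+1)\<parallel>\<close> in the Banach algebra \<open>\<ell>\<^sup>1\<close>, where probability series
  have norm 1. For products, \<open>(AB)^n - (AB)^(n+1) = (A^n - A^(n+1)) B^n + (B^n - B^(n+1)) A^(n+1)\<close>.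
  For \<open>X = tA + (1-t)B\<close> one has \<open>X^n - X^(n+1) = t(1-A)X^n + (1-t)(1-B)X^n\<close>; expanding \<open>X^n\<close>
  binomially, the term \<open>(A^j - A^(j+1)) B^(n-j)\<close> has norm \<open>O(1/(j+1))\<close>, and the binomial
  average of \<open>1/(j+1)\<close> is at most \<open>1/(t(n+1))\<close>. Subordination \<open>a \<mapsto> \<Sum>\<^sub>k a\<^sub>k g^k\<close> by a
  probability series \<open>g\<close> is a contractive algebra homomorphism of \<open>\<ell>\<^sup>1\<close>, so it preserves the bound.
\<close>

definition l1_fps :: "real fps \<Rightarrow> bool" where
  "l1_fps a \<longleftrightarrow> summable (\<lambda>n. \<bar>fps_nth a n\<bar>)"

definition l1_norm :: "real fps \<Rightarrow> real" where
  "l1_norm a = (\<Sum>n. \<bar>fps_nth a n\<bar>)"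

lemma l1_norm_nonneg: "l1_fps a \<Longrightarrow> 0 \<le> l1_norm a"
  unfolding l1_norm_def l1_fps_def by (rule suminf_nonneg) auto

lemma l1_fps_add: "l1_fps a \<Longrightarrow> l1_fps b \<Longrightarrow> l1_fps (a + b)"
  unfolding l1_fps_def
  by (rule summable_comparison_test[where g="\<lambda>n. \<bar>fps_nth a n\<bar> + \<bar>fps_nth b n\<bar>"])
     (auto intro: summable_add)

lemma l1_norm_add_le:
  assumes "l1_fps a" "l1_fps b"
  shows "l1_norm (a + b) \<le> l1_norm a + l1_norm b"
proof -
  have "l1_norm (a + b) \<le> (\<Sum>n. \<bar>fps_nth a n\<bar> + \<bar>fps_nth b n\<bar>)"
    using l1_fps_add[OF assms] assms unfolding l1_norm_def l1_fps_def
    by (intro suminf_le summable_add) (auto intro: abs_triangle_ineq)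
  also have "\<dots> = l1_norm a + l1_norm b"
    using assms unfolding l1_norm_def l1_fps_def by (rule suminf_add[symmetric])
  finally show ?thesis .
qed

lemma l1_fps_diff: "l1_fps a \<Longrightarrow> l1_fps b \<Longrightarrow> l1_fps (a - b)"
  using l1_fps_add[of a "- b"] by (simp add: l1_fps_def)

lemma l1_norm_diff_le: "l1_fps a \<Longrightarrow> l1_fps b \<Longrightarrow> l1_norm (a - b) \<le> l1_norm a + l1_norm b"
  using l1_norm_add_le[of a "- b"] by (simp add: l1_fps_def l1_norm_def)

lemma l1_fps_const_mult: "l1_fps a \<Longrightarrow> l1_fps (fps_const c * a)"
  unfolding l1_fps_def by (simp add: abs_mult summable_mult)

lemma l1_norm_const_mult: "l1_fps a \<Longrightarrow> l1_norm (fps_const c * a) = \<bar>c\<bar> * l1_norm a"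
  unfolding l1_norm_def l1_fps_def by (simp add: abs_mult suminf_mult)

lemma abs_fps_mult_nth_le:
  fixes a b :: "real fps"
  shows "\<bar>fps_nth (a * b) n\<bar> \<le> (\<Sum>i\<le>n. \<bar>fps_nth a i\<bar> * \<bar>fps_nth b (n - i)\<bar>)"
  using sum_abs[of "\<lambda>i. fps_nth a i * fps_nth b (n - i)" "{..n}"]
  by (simp add: fps_mult_nth atLeast0AtMost abs_mult)

lemma l1_fps_mult_and_norm_le:
  assumes "l1_fps a" "l1_fps b"
  shows "l1_fps (a * b)" "l1_norm (a * b) \<le> l1_norm a * l1_norm b"
proof -
  have cauchy: "(\<lambda>n. \<Sum>i\<le>n. \<bar>fps_nth a i\<bar> * \<bar>fps_nth b (n - i)\<bar>) sums (l1_norm a * l1_norm b)"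
    using Cauchy_product_sums[of "\<lambda>n. \<bar>fps_nth a n\<bar>" "\<lambda>n. \<bar>fps_nth b n\<bar>"] assms
    unfolding l1_fps_def l1_norm_def by simp
  show "l1_fps (a * b)" unfolding l1_fps_def
    by (rule summable_comparison_test[OF _ sums_summable[OF cauchy]])
       (auto intro: abs_fps_mult_nth_le)
  then have "l1_norm (a * b) \<le> (\<Sum>n. \<Sum>i\<le>n. \<bar>fps_nth a i\<bar> * \<bar>fps_nth b (n - i)\<bar>)"
    unfolding l1_norm_def l1_fps_def
    by (intro suminf_le sums_summable[OF cauchy] abs_fps_mult_nth_le)
  then show "l1_norm (a * b) \<le> l1_norm a * l1_norm b"
    using sums_unique[OF cauchy] by simp
qed

lemmas l1_fps_mult = l1_fps_mult_and_norm_le(1)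
lemmas l1_norm_mult_le = l1_fps_mult_and_norm_le(2)

lemma l1_fps_1: "l1_fps 1"
proof -
  have "(\<lambda>n. \<bar>fps_nth (1::real fps) n\<bar>) = (\<lambda>n. if n = 0 then 1 else 0)" by auto
  then show ?thesis unfolding l1_fps_def by simp
qed

lemma l1_fps_power: "l1_fps a \<Longrightarrow> l1_fps (a ^ n)"
  by (induction n) (auto intro: l1_fps_1 l1_fps_mult)

lemma l1_fps_sum: "(\<And>i. i \<in> I \<Longrightarrow> l1_fps (f i)) \<Longrightarrow> l1_fps (sum f I)"
proof (induction I rule: infinite_finite_induct)
  case (insert x F)
  then show ?case using l1_fps_add[of "f x" "sum f F"] by simp
qed (auto simp: l1_fps_def)

lemma l1_norm_sum_le:
  "(\<And>i. i \<in> I \<Longrightarrow> l1_fps (f i)) \<Longrightarrow> l1_norm (sum f I) \<le> (\<Sum>i\<in>I. l1_norm (f i))"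
proof (induction I rule: infinite_finite_induct)
  case (insert x F)
  then show ?case
    using l1_norm_add_le[of "f x" "sum f F"] l1_fps_sum[of F f] by (simp add: add_mono order_trans)
qed (auto simp: l1_norm_def)

lemma sum_le_of_sums_nonneg:
  fixes f :: "nat \<Rightarrow> real"
  assumes "\<And>m. 0 \<le> f m" "f sums s" "finite B"
  shows "sum f B \<le> s"
  using assms sum_le_suminf[of f B] by (auto simp: sums_iff)

definition prob_fps :: "real fps \<Rightarrow> bool" where
  "prob_fps a \<longleftrightarrow> (\<forall>n. 0 \<le> fps_nth a n) \<and> fps_nth a sums 1"

lemma prob_fps_l1: "prob_fps a \<Longrightarrow> l1_fps a"
  unfolding prob_fps_def l1_fps_def by (auto simp: sums_iff)

lemma prob_fps_l1_norm: "prob_fps a \<Longrightarrow> l1_norm a = 1"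
  unfolding prob_fps_def l1_norm_def by (auto simp: sums_iff)

lemma prob_fps_nth_le_1: "prob_fps a \<Longrightarrow> fps_nth a n \<le> 1"
  using sum_le_of_sums_nonneg[of "fps_nth a" 1 "{n}"] by (simp add: prob_fps_def)

lemma prob_fps_1: "prob_fps 1"
proof -
  have "fps_nth (1::real fps) = (\<lambda>n. if n = 0 then 1 else 0)" by (auto simp: fun_eq_iff)
  then show ?thesis
    using sums_single[of 0 "\<lambda>_. 1::real"] unfolding prob_fps_def by simp
qed

lemma prob_fps_mult:
  assumes "prob_fps a" "prob_fps b"
  shows "prob_fps (a * b)"
proof -
  have "fps_nth (a * b) = (\<lambda>n. \<Sum>i\<le>n. fps_nth a i * fps_nth b (n - i))"
    by (auto simp: fun_eq_iff fps_mult_nth atLeast0AtMost)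
  moreover have "(\<lambda>n. \<Sum>i\<le>n. fps_nth a i * fps_nth b (n - i)) sums (1 * 1)"
    using Cauchy_product_sums[of "fps_nth a" "fps_nth b"] assms
    unfolding prob_fps_def by (auto simp: sums_iff)
  ultimately show ?thesis
    using assms unfolding prob_fps_def by (auto intro!: sum_nonneg)
qed

lemma prob_fps_power: "prob_fps a \<Longrightarrow> prob_fps (a ^ n)"
  by (induction n) (auto intro: prob_fps_1 prob_fps_mult)

lemma prob_fps_convex:
  assumes "prob_fps a" "prob_fps b" "0 \<le> t" "t \<le> 1"
  shows "prob_fps (fps_const t * a + fps_const (1 - t) * b)"
proof -
  have "fps_nth (fps_const t * a + fps_const (1 - t) * b) = (\<lambda>n. t * fps_nth a n + (1 - t) * fps_nth b n)"
    by (simp add: fun_eq_iff)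
  moreover have "(\<lambda>n. t * fps_nth a n + (1 - t) * fps_nth b n) sums (t * 1 + (1 - t) * 1)"
    using assms unfolding prob_fps_def by (intro sums_add sums_mult) auto
  ultimately show ?thesis using assms unfolding prob_fps_def by auto
qed

lemma l1_norm_mult_prob_le: "l1_fps x \<Longrightarrow> prob_fps p \<Longrightarrow> l1_norm (x * p) \<le> l1_norm x"
  using l1_norm_mult_le[of x p] by (simp add: prob_fps_l1 prob_fps_l1_norm)

lemma l1_fps_power_diff: "prob_fps p \<Longrightarrow> l1_fps (p ^ n - p ^ Suc n)"
  by (intro l1_fps_diff prob_fps_l1 prob_fps_power)

lemma l1_norm_power_diff_le_2: "prob_fps p \<Longrightarrow> l1_norm (p ^ n - p ^ Suc n) \<le> 2"
  using l1_norm_diff_le[of "p ^ n" "p ^ Suc n"]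
  by (simp add: prob_fps_l1 prob_fps_power prob_fps_l1_norm del: power_Suc)

definition classA_fps :: "real fps \<Rightarrow> bool" where
  "classA_fps p \<longleftrightarrow> prob_fps p \<and> (\<exists>C. \<forall>n. real n * l1_norm (p ^ n - p ^ Suc n) \<le> C)"

lemma mult_power_diff_eq:
  fixes a b :: "'a::comm_ring_1"
  shows "(a * b) ^ n - (a * b) ^ Suc n = (a ^ n - a ^ Suc n) * b ^ n + (b ^ n - b ^ Suc n) * a ^ Suc n"
  by (simp add: power_mult_distrib algebra_simps)

lemma classA_fps_mult:
  assumes A: "classA_fps a" and B: "classA_fps b"
  shows "classA_fps (a * b)"
proof -
  obtain C1 C2 where a: "prob_fps a" "\<And>n. real n * l1_norm (a ^ n - a ^ Suc n) \<le> C1"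
    and b: "prob_fps b" "\<And>n. real n * l1_norm (b ^ n - b ^ Suc n) \<le> C2"
    using A B unfolding classA_fps_def by blast
  have "real n * l1_norm ((a * b) ^ n - (a * b) ^ Suc n) \<le> C1 + C2" for n
  proof -
    have "l1_norm ((a * b) ^ n - (a * b) ^ Suc n)
        \<le> l1_norm ((a ^ n - a ^ Suc n) * b ^ n) + l1_norm ((b ^ n - b ^ Suc n) * a ^ Suc n)"
      unfolding mult_power_diff_eq using a b
      by (intro l1_norm_add_le l1_fps_mult l1_fps_power_diff prob_fps_l1 prob_fps_power)
    also have "\<dots> \<le> l1_norm (a ^ n - a ^ Suc n) + l1_norm (b ^ n - b ^ Suc n)"
      using a b by (intro add_mono l1_norm_mult_prob_le l1_fps_power_diff prob_fps_power)
    finally have "real n * l1_norm ((a * b) ^ n - (a * b) ^ Suc n)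
        \<le> real n * l1_norm (a ^ n - a ^ Suc n) + real n * l1_norm (b ^ n - b ^ Suc n)"
      by (simp add: mult_left_mono distrib_left[symmetric])
    also have "\<dots> \<le> C1 + C2" using a b by (intro add_mono)
    finally show ?thesis .
  qed
  then show ?thesis using a b prob_fps_mult unfolding classA_fps_def by blast
qed

lemma binomial_average_inverse_le:
  fixes s u :: real
  assumes "0 \<le> s" "0 \<le> u" "s + u = 1"
  shows "s * (\<Sum>j\<le>n. real (n choose j) * s ^ j * u ^ (n - j) / real (Suc j)) \<le> 1 / real (Suc n)"
proof -
  define f where "f i = real (Suc n choose i) * s ^ i * u ^ (Suc n - i)" for i
  have summand: "s * (real (n choose j) * s ^ j * u ^ (n - j) / real (Suc j)) = f (Suc j) / real (Suc n)"
    for j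
  proof -
    have "Suc j * (Suc n choose Suc j) = Suc n * (n choose j)"
      using binomial_absorption[of j "Suc n"] by simp
    then have "real (Suc j) * real (Suc n choose Suc j) = real (Suc n) * real (n choose j)"
      by (metis of_nat_mult)
    then have choose: "real (Suc n choose Suc j) = real (Suc n) * real (n choose j) / real (Suc j)"
      by (simp add: field_simps)
    show ?thesis unfolding f_def choose by (simp add: field_simps del: of_nat_Suc)
  qed
  have "s * (\<Sum>j\<le>n. real (n choose j) * s ^ j * u ^ (n - j) / real (Suc j))
      = (\<Sum>j\<le>n. f (Suc j)) / real (Suc n)"
    unfolding sum_distrib_left sum_divide_distrib by (intro sum.cong refl summand)
  also have "(\<Sum>j\<le>n. f (Suc j)) = (\<Sum>i\<le>Suc n. f i) - f 0"
    by (simp only: sum.atMost_Suc_shift[of f n])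
  also have "(\<Sum>i\<le>Suc n. f i) = (s + u) ^ Suc n"
    unfolding f_def binomial_ring by simp
  also have "((s + u) ^ Suc n - f 0) / real (Suc n) \<le> 1 / real (Suc n)"
    using assms by (intro divide_right_mono) (auto simp: f_def)
  finally show ?thesis .
qed

lemma convex_power_diff_eq:
  fixes s u a b :: "'a::comm_ring_1"
  assumes "s + u = 1"
  shows "(s * a + u * b) ^ n - (s * a + u * b) ^ Suc n
    = s * ((1 - a) * (s * a + u * b) ^ n) + u * ((1 - b) * (s * a + u * b) ^ n)"
proof -
  have u: "u = 1 - s" using assms by (simp add: algebra_simps)
  show ?thesis unfolding u by (simp add: algebra_simps)
qed

lemma l1_norm_one_minus_mult_convex_power_le:
  assumes a: "prob_fps a" and b: "prob_fps b" and s: "0 \<le> s" "0 \<le> u" "s + u = 1"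
    and K: "\<And>j. real (Suc j) * l1_norm (a ^ j - a ^ Suc j) \<le> K"
  shows "s * l1_norm ((1 - a) * (fps_const s * a + fps_const u * b) ^ n) \<le> K / real (Suc n)"
proof -
  define c where "c j = real (n choose j) * s ^ j * u ^ (n - j)" for j
  have c_nonneg: "0 \<le> c j" for j unfolding c_def using s by simp
  have K_nonneg: "0 \<le> K" using K[of 0] l1_norm_nonneg[OF l1_fps_power_diff[OF a, of 0]] by simp
  have l1: "l1_fps ((a ^ j - a ^ Suc j) * b ^ (n - j))" for j
    using a b by (intro l1_fps_mult l1_fps_power_diff prob_fps_l1 prob_fps_power)
  have "(1 - a) * (fps_const s * a + fps_const u * b) ^ n
      = (\<Sum>j\<le>n. fps_const (c j) * ((a ^ j - a ^ Suc j) * b ^ (n - j)))"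
    unfolding binomial_ring sum_distrib_left c_def
    by (intro sum.cong refl) (simp add: power_mult_distrib fps_of_nat[symmetric] algebra_simps)
  then have "l1_norm ((1 - a) * (fps_const s * a + fps_const u * b) ^ n)
      \<le> (\<Sum>j\<le>n. l1_norm (fps_const (c j) * ((a ^ j - a ^ Suc j) * b ^ (n - j))))"
    by (simp only:) (intro l1_norm_sum_le l1_fps_const_mult l1)
  also have "\<dots> = (\<Sum>j\<le>n. c j * l1_norm ((a ^ j - a ^ Suc j) * b ^ (n - j)))"
    by (intro sum.cong refl) (simp only: l1_norm_const_mult[OF l1] abs_of_nonneg[OF c_nonneg])
  also have "\<dots> \<le> (\<Sum>j\<le>n. c j * (K / real (Suc j)))"
  proof (intro sum_mono mult_left_mono c_nonneg)
    fix j
    have "l1_norm ((a ^ j - a ^ Suc j) * b ^ (n - j)) \<le> l1_norm (a ^ j - a ^ Suc j)"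
      using a b by (intro l1_norm_mult_prob_le l1_fps_power_diff prob_fps_power)
    also have "\<dots> \<le> K / real (Suc j)"
      using K[of j] by (simp add: field_simps del: of_nat_Suc)
    finally show "l1_norm ((a ^ j - a ^ Suc j) * b ^ (n - j)) \<le> K / real (Suc j)" .
  qed
  finally have "s * l1_norm ((1 - a) * (fps_const s * a + fps_const u * b) ^ n)
      \<le> s * (\<Sum>j\<le>n. c j * (K / real (Suc j)))"
    using s(1) by (intro mult_left_mono)
  also have "\<dots> = K * (s * (\<Sum>j\<le>n. real (n choose j) * s ^ j * u ^ (n - j) / real (Suc j)))"
    unfolding c_def sum_distrib_left by (intro sum.cong refl) (simp add: field_simps)
  also have "\<dots> \<le> K * (1 / real (Suc n))"
    using binomial_average_inverse_le[OF s, of n] K_nonneg by (intro mult_left_mono)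
  finally show ?thesis by simp
qed

lemma Suc_mult_l1_norm_power_diff_le:
  assumes "prob_fps p" "\<And>n. real n * l1_norm (p ^ n - p ^ Suc n) \<le> C"
  shows "real (Suc n) * l1_norm (p ^ n - p ^ Suc n) \<le> C + 2"
  using assms(2)[of n] l1_norm_power_diff_le_2[OF assms(1), of n] by (simp add: algebra_simps)

lemma classA_fps_convex:
  assumes A: "classA_fps a" and B: "classA_fps b" and t: "0 \<le> t" "t \<le> 1"
  shows "classA_fps (fps_const t * a + fps_const (1 - t) * b)" (is "classA_fps ?x")
proof -
  obtain C1 C2 where a: "prob_fps a" "\<And>n. real n * l1_norm (a ^ n - a ^ Suc n) \<le> C1"
    and b: "prob_fps b" "\<And>n. real n * l1_norm (b ^ n - b ^ Suc n) \<le> C2"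
    using A B unfolding classA_fps_def by blast
  note K1 = Suc_mult_l1_norm_power_diff_le[OF a]
  note K2 = Suc_mult_l1_norm_power_diff_le[OF b]
  have C_nonneg: "0 \<le> C1" "0 \<le> C2" using a(2)[of 0] b(2)[of 0] by simp_all
  have x: "prob_fps ?x" using a(1) b(1) t by (rule prob_fps_convex)
  have "real n * l1_norm (?x ^ n - ?x ^ Suc n) \<le> (C1 + 2) + (C2 + 2)" for n
  proof -
    have la: "l1_fps ((1 - a) * ?x ^ n)"
      using a x by (intro l1_fps_mult l1_fps_diff l1_fps_1) (auto intro: prob_fps_l1 prob_fps_power)
    have lb: "l1_fps ((1 - b) * ?x ^ n)"
      using b x by (intro l1_fps_mult l1_fps_diff l1_fps_1) (auto intro: prob_fps_l1 prob_fps_power)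
    have ha: "t * l1_norm ((1 - a) * ?x ^ n) \<le> (C1 + 2) / real (Suc n)"
      using l1_norm_one_minus_mult_convex_power_le[OF a(1) b(1) t(1) _ _ K1, of "1 - t" n] t
      by simp
    have hb: "(1 - t) * l1_norm ((1 - b) * ?x ^ n) \<le> (C2 + 2) / real (Suc n)"
      using l1_norm_one_minus_mult_convex_power_le[OF b(1) a(1) _ _ _ K2, of "1 - t" t n] t
      by (simp add: add.commute)
    have "?x ^ n - ?x ^ Suc n = fps_const t * ((1 - a) * ?x ^ n) + fps_const (1 - t) * ((1 - b) * ?x ^ n)"
      by (rule convex_power_diff_eq) simp
    then have "l1_norm (?x ^ n - ?x ^ Suc n)
        \<le> l1_norm (fps_const t * ((1 - a) * ?x ^ n)) + l1_norm (fps_const (1 - t) * ((1 - b) * ?x ^ n))"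
      using la lb by (simp only:) (intro l1_norm_add_le l1_fps_const_mult)
    also have "\<dots> = t * l1_norm ((1 - a) * ?x ^ n) + (1 - t) * l1_norm ((1 - b) * ?x ^ n)"
      using t by (simp add: l1_norm_const_mult[OF la] l1_norm_const_mult[OF lb])
    also have "\<dots> \<le> ((C1 + 2) + (C2 + 2)) / real (Suc n)"
      using ha hb by (simp add: add_divide_distrib)
    finally have "real n * l1_norm (?x ^ n - ?x ^ Suc n)
        \<le> real n * (((C1 + 2) + (C2 + 2)) / real (Suc n))"
      by (intro mult_left_mono) auto
    also have "\<dots> \<le> (C1 + 2) + (C2 + 2)"
      using C_nonneg by (simp add: field_simps del: of_nat_Suc) (simp add: algebra_simps)
    finally show ?thesis .
  qed
  then show ?thesis using x unfolding classA_fps_def by blast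
qed

lemma sums_mixture:
  fixes c :: "nat \<Rightarrow> real" and f :: "nat \<Rightarrow> nat \<Rightarrow> real"
  assumes c_nonneg: "\<And>k. 0 \<le> c k" and c_summable: "summable c"
    and f_nonneg: "\<And>k m. 0 \<le> f k m" and f_sums: "\<And>k. f k sums 1"
  shows "(\<lambda>m. \<Sum>k. c k * f k m) sums (\<Sum>k. c k)"
proof -
  define h where "h = (\<lambda>(k, m). c k * f k m)"
  have h_nonneg: "0 \<le> h x" for x
    unfolding h_def using c_nonneg f_nonneg by (auto simp: case_prod_beta)
  have f_le_1: "f k m \<le> 1" for k m
    using sum_le_of_sums_nonneg[of "f k" 1 "{m}"] f_nonneg f_sums by simp
  have finite_sum_le: "sum h F \<le> suminf c" if "finite F" for F
  proof -
    have "sum h F \<le> sum h (fst ` F \<times> snd ` F)"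
      using that h_nonneg by (intro sum_mono2) (auto simp: image_iff, force+)
    also have "\<dots> = (\<Sum>k\<in>fst ` F. c k * (\<Sum>m\<in>snd ` F. f k m))"
      unfolding h_def sum.cartesian_product[symmetric] by (simp add: sum_distrib_left)
    also have "\<dots> \<le> (\<Sum>k\<in>fst ` F. c k)"
      using sum_le_of_sums_nonneg[OF f_nonneg f_sums] c_nonneg that
      by (intro sum_mono) (simp add: mult_left_le)
    also have "\<dots> \<le> suminf c"
      using that c_nonneg c_summable by (intro sum_le_suminf) auto
    finally show ?thesis .
  qed
  have "h summable_on UNIV \<times> UNIV"
    by (rule nonneg_bdd_above_summable_on) (use h_nonneg finite_sum_le in \<open>auto intro!: bdd_aboveI\<close>)
  then obtain S where hS: "(h has_sum S) (UNIV \<times> UNIV)" by (auto simp: summable_on_def)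
  have rows: "((\<lambda>m. h (k, m)) has_sum c k) UNIV" for k
    using sums_mult[OF f_sums, of "c k"] unfolding h_def using c_nonneg f_nonneg
    by (intro sums_nonneg_imp_has_sum) auto
  have "c sums S" by (rule has_sum_imp_sums[OF has_sum_SigmaD[OF hS rows]])
  then have S: "S = suminf c" by (simp add: sums_iff)
  have "summable (\<lambda>k. c k * f k m)" for m
    by (rule summable_comparison_test[OF _ c_summable])
       (use c_nonneg f_nonneg f_le_1 in \<open>auto intro!: exI[of _ 0] mult_left_le\<close>)
  then have columns: "((\<lambda>k. (\<lambda>(m, k). h (k, m)) (m, k)) has_sum (\<Sum>k. c k * f k m)) UNIV" for m
    unfolding h_def using c_nonneg f_nonneg by (intro sums_nonneg_imp_has_sum summable_sums) auto
  have "((\<lambda>(m, k). h (k, m)) has_sum S) (UNIV \<times> UNIV)"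
    using hS has_sum_swap by blast
  then have "((\<lambda>m. \<Sum>k. c k * f k m) has_sum S) UNIV" by (rule has_sum_SigmaD[OF _ columns])
  then show ?thesis unfolding S by (rule has_sum_imp_sums)
qed

definition fps_subord :: "real fps \<Rightarrow> real fps \<Rightarrow> real fps" where
  "fps_subord g a = Abs_fps (\<lambda>m. \<Sum>k. fps_nth a k * fps_nth (g ^ k) m)"

lemma fps_subord_nth: "fps_nth (fps_subord g a) m = (\<Sum>k. fps_nth a k * fps_nth (g ^ k) m)"
  unfolding fps_subord_def by simp

lemma prob_fps_power_nth_bounds:
  assumes "prob_fps g" shows "0 \<le> fps_nth (g ^ k) m" "fps_nth (g ^ k) m \<le> 1"
  using prob_fps_power[OF assms, of k] prob_fps_nth_le_1[OF prob_fps_power[OF assms, of k]]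
  unfolding prob_fps_def by auto

lemma fps_subord_summable:
  assumes g: "prob_fps g" and a: "l1_fps a"
  shows "summable (\<lambda>k. \<bar>fps_nth a k * fps_nth (g ^ k) m\<bar>)"
proof (rule summable_comparison_test[of _ "\<lambda>k. \<bar>fps_nth a k\<bar>"])
  show "summable (\<lambda>k. \<bar>fps_nth a k\<bar>)" using a unfolding l1_fps_def .
  show "\<exists>N. \<forall>n\<ge>N. norm \<bar>fps_nth a n * fps_nth (g ^ n) m\<bar> \<le> \<bar>fps_nth a n\<bar>"
    using prob_fps_power_nth_bounds[OF g] by (intro exI[of _ 0]) (auto simp: abs_mult intro: mult_left_le)
qed

lemma l1_fps_subord_and_norm_le:
  assumes g: "prob_fps g" and a: "l1_fps a"
  shows "l1_fps (fps_subord g a)" "l1_norm (fps_subord g a) \<le> l1_norm a"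
proof -
  have mixture: "(\<lambda>m. \<Sum>k. \<bar>fps_nth a k\<bar> * fps_nth (g ^ k) m) sums (\<Sum>k. \<bar>fps_nth a k\<bar>)"
    using a prob_fps_power_nth_bounds[OF g] prob_fps_power[OF g]
    unfolding l1_fps_def prob_fps_def by (intro sums_mixture) auto
  have le: "\<bar>fps_nth (fps_subord g a) m\<bar> \<le> (\<Sum>k. \<bar>fps_nth a k\<bar> * fps_nth (g ^ k) m)" for m
  proof -
    have "\<bar>fps_nth (fps_subord g a) m\<bar> \<le> (\<Sum>k. \<bar>fps_nth a k * fps_nth (g ^ k) m\<bar>)"
      unfolding fps_subord_nth by (rule summable_rabs[OF fps_subord_summable[OF g a]])
    also have "\<dots> = (\<Sum>k. \<bar>fps_nth a k\<bar> * fps_nth (g ^ k) m)"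
      using prob_fps_power_nth_bounds[OF g] by (simp add: abs_mult)
    finally show ?thesis .
  qed
  show l1: "l1_fps (fps_subord g a)" unfolding l1_fps_def
    by (rule summable_comparison_test[OF _ sums_summable[OF mixture]])
       (use le in \<open>auto intro!: exI[of _ 0]\<close>)
  have "l1_norm (fps_subord g a) \<le> (\<Sum>m. \<Sum>k. \<bar>fps_nth a k\<bar> * fps_nth (g ^ k) m)"
    unfolding l1_norm_def using l1 unfolding l1_fps_def by (intro suminf_le le sums_summable[OF mixture])
  then show "l1_norm (fps_subord g a) \<le> l1_norm a"
    unfolding l1_norm_def using sums_unique[OF mixture] by simp
qed

lemma prob_fps_subord:
  assumes g: "prob_fps g" and a: "prob_fps a"
  shows "prob_fps (fps_subord g a)"
proof -
  have "(\<lambda>m. \<Sum>k. fps_nth a k * fps_nth (g ^ k) m) sums (\<Sum>k. fps_nth a k)"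
    using a prob_fps_power_nth_bounds[OF g] prob_fps_power[OF g] unfolding prob_fps_def
    by (intro sums_mixture) (auto simp: sums_iff)
  moreover have "(\<Sum>k. fps_nth a k) = 1" using a unfolding prob_fps_def by (simp add: sums_iff)
  moreover have "0 \<le> fps_nth (fps_subord g a) m" for m
    unfolding fps_subord_nth
    using a prob_fps_power_nth_bounds[OF g] unfolding prob_fps_def
    by (intro suminf_nonneg summable_rabs_cancel[OF fps_subord_summable[OF g prob_fps_l1[OF a]]]) auto
  ultimately show ?thesis unfolding prob_fps_def fps_subord_nth[abs_def] by simp
qed

lemma fps_subord_diff:
  assumes g: "prob_fps g" and a: "l1_fps a" and b: "l1_fps b"
  shows "fps_subord g (a - b) = fps_subord g a - fps_subord g b"
proof (rule fps_ext)
  fix m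
  have "fps_nth (fps_subord g a - fps_subord g b) m
      = (\<Sum>k. fps_nth a k * fps_nth (g ^ k) m) - (\<Sum>k. fps_nth b k * fps_nth (g ^ k) m)"
    by (simp add: fps_subord_nth)
  also have "\<dots> = (\<Sum>k. fps_nth a k * fps_nth (g ^ k) m - fps_nth b k * fps_nth (g ^ k) m)"
    by (rule suminf_diff[OF summable_rabs_cancel[OF fps_subord_summable[OF g a]]
                            summable_rabs_cancel[OF fps_subord_summable[OF g b]]])
  finally show "fps_nth (fps_subord g (a - b)) m = fps_nth (fps_subord g a - fps_subord g b) m"
    by (simp add: fps_subord_nth algebra_simps)
qed

lemma fps_subord_1: "fps_subord g 1 = 1"
proof (rule fps_ext)
  fix m
  have "(\<Sum>k. fps_nth (1::real fps) k * fps_nth (g ^ k) m) = (\<Sum>k\<in>{0}. fps_nth (1::real fps) k * fps_nth (g ^ k) m)"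
    by (rule suminf_finite) auto
  then show "fps_nth (fps_subord g 1) m = fps_nth 1 m" by (simp add: fps_subord_nth)
qed

lemma fps_subord_mult:
  assumes g: "prob_fps g" and a: "l1_fps a" and b: "l1_fps b"
  shows "fps_subord g (a * b) = fps_subord g a * fps_subord g b"
proof (rule fps_ext)
  fix m
  define G where "G k i = fps_nth (g ^ k) i" for k i
  \<comment> \<open>\<open>T i\<close> is the Cauchy product of the series defining the \<open>i\<close>-th and \<open>(m-i)\<close>-th
    coefficients; summing over \<open>i\<close> first and using \<open>g^j = g^k g^(j-k)\<close> gives the \<open>j\<close>-th term of
    the series for \<open>fps_subord g (a * b)\<close>.\<close>
  define T where "T i j = (\<Sum>k\<le>j. (fps_nth a k * G k i) * (fps_nth b (j - k) * G (j - k) (m - i)))"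
    for i j
  have cauchy: "T i sums ((\<Sum>k. fps_nth a k * G k i) * (\<Sum>k. fps_nth b k * G k (m - i)))" for i
    unfolding T_def G_def
    using Cauchy_product_sums[of "\<lambda>k. fps_nth a k * G k i" "\<lambda>k. fps_nth b k * G k (m - i)"]
      fps_subord_summable[OF g a, of i] fps_subord_summable[OF g b, of "m - i"]
    unfolding G_def by simp
  have power_split: "G j m = (\<Sum>i=0..m. G k i * G (j - k) (m - i))" if "k \<le> j" for j k
  proof -
    have "g ^ j = g ^ k * g ^ (j - k)" using that by (simp add: power_add[symmetric])
    then show ?thesis unfolding G_def by (simp add: fps_mult_nth)
  qed
  have inner: "(\<Sum>i=0..m. T i j) = fps_nth (a * b) j * G j m" for j
  proof -
    have "(\<Sum>i=0..m. T i j)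
        = (\<Sum>k\<le>j. fps_nth a k * fps_nth b (j - k) * (\<Sum>i=0..m. G k i * G (j - k) (m - i)))"
      unfolding T_def sum_distrib_left by (subst sum.swap) (simp add: algebra_simps)
    also have "\<dots> = (\<Sum>k\<le>j. fps_nth a k * fps_nth b (j - k) * G j m)"
      by (intro sum.cong refl) (simp add: power_split)
    also have "\<dots> = fps_nth (a * b) j * G j m"
      by (simp add: fps_mult_nth atLeast0AtMost sum_distrib_right)
    finally show ?thesis .
  qed
  have "fps_nth (fps_subord g a * fps_subord g b) m
      = (\<Sum>i=0..m. (\<Sum>k. fps_nth a k * G k i) * (\<Sum>k. fps_nth b k * G k (m - i)))"
    by (simp add: fps_mult_nth fps_subord_nth G_def)
  also have "\<dots> = (\<Sum>i=0..m. \<Sum>j. T i j)"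
    using cauchy by (simp add: sums_iff)
  also have "\<dots> = (\<Sum>j. \<Sum>i=0..m. T i j)"
    by (rule suminf_sum[symmetric]) (use cauchy in \<open>auto simp: sums_iff\<close>)
  also have "\<dots> = fps_nth (fps_subord g (a * b)) m"
    by (simp add: inner fps_subord_nth G_def)
  finally show "fps_nth (fps_subord g (a * b)) m = fps_nth (fps_subord g a * fps_subord g b) m" ..
qed

lemma fps_subord_power:
  assumes g: "prob_fps g" and a: "l1_fps a"
  shows "fps_subord g (a ^ n) = fps_subord g a ^ n"
  by (induction n) (simp_all add: fps_subord_1 fps_subord_mult[OF g a l1_fps_power[OF a]])

lemma classA_fps_subord:
  assumes g: "prob_fps g" and A: "classA_fps a"
  shows "classA_fps (fps_subord g a)"
proof -
  obtain C where a: "prob_fps a" and C: "\<And>n. real n * l1_norm (a ^ n - a ^ Suc n) \<le> C"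
    using A unfolding classA_fps_def by blast
  have "real n * l1_norm (fps_subord g a ^ n - fps_subord g a ^ Suc n) \<le> C" for n
  proof -
    have "fps_subord g a ^ n - fps_subord g a ^ Suc n = fps_subord g (a ^ n - a ^ Suc n)"
      using a g by (simp add: fps_subord_diff fps_subord_power prob_fps_l1 l1_fps_power del: power_Suc)
    then have "real n * l1_norm (fps_subord g a ^ n - fps_subord g a ^ Suc n)
        \<le> real n * l1_norm (a ^ n - a ^ Suc n)"
      using l1_fps_subord_and_norm_le(2)[OF g l1_fps_power_diff[OF a]] by (simp add: mult_left_mono)
    also have "\<dots> \<le> C" by (rule C)
    finally show ?thesis .
  qed
  then show ?thesis using prob_fps_subord[OF g a] unfolding classA_fps_def by blast
qed

definition nonneg_supp :: "(int \<Rightarrow> real) \<Rightarrow> bool" where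
  "nonneg_supp F \<longleftrightarrow> (\<forall>k<0. F k = 0)"

definition fps_of :: "(int \<Rightarrow> real) \<Rightarrow> real fps" where
  "fps_of F = Abs_fps (\<lambda>n. F (int n))"

lemma fps_nth_fps_of [simp]: "fps_nth (fps_of F) n = F (int n)"
  unfolding fps_of_def by simp

lemma fps_nth_fps_of_eq: "fps_nth (fps_of F) = (\<lambda>n. F (int n))"
  by (simp add: fun_eq_iff)

lemma conv_nonneg_supp_eq:
  assumes "nonneg_supp F" "nonneg_supp G"
  shows "(F \<star> G) m = (if m < 0 then 0 else (\<Sum>i\<le>nat m. F (int i) * G (m - int i)))"
proof -
  have "(F \<star> G) m = (\<Sum>k\<in>{0..m}. F k * G (m - k))"
    unfolding conv_def
    by (subst infsum_cong_neutral[of "{0..m}"]) (use assms in \<open>auto simp: nonneg_supp_def not_le\<close>)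
  also have "\<dots> = (if m < 0 then 0 else (\<Sum>i\<le>nat m. F (int i) * G (m - int i)))"
  proof (cases "m < 0")
    case False
    then have "{0..m} = int ` {0..nat m}" using image_int_atLeastAtMost[of 0 "nat m"] by simp
    then show ?thesis using False by (simp add: sum.reindex atLeast0AtMost)
  qed simp
  finally show ?thesis .
qed

lemma nonneg_supp_conv: "nonneg_supp F \<Longrightarrow> nonneg_supp G \<Longrightarrow> nonneg_supp (F \<star> G)"
  using conv_nonneg_supp_eq unfolding nonneg_supp_def by simp

lemma fps_of_conv:
  assumes "nonneg_supp F" "nonneg_supp G"
  shows "fps_of (F \<star> G) = fps_of F * fps_of G"
proof (rule fps_ext)
  fix n
  have "fps_nth (fps_of (F \<star> G)) n = (\<Sum>i\<le>n. F (int i) * G (int (n - i)))"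
    using conv_nonneg_supp_eq[OF assms, of "int n"] by (simp add: of_nat_diff)
  then show "fps_nth (fps_of (F \<star> G)) n = fps_nth (fps_of F * fps_of G) n"
    by (simp add: fps_mult_nth atLeast0AtMost)
qed

lemma nonneg_supp_conv_pow: "nonneg_supp G \<Longrightarrow> nonneg_supp (conv_pow G n)"
proof (induction n)
  case 0
  show ?case by (simp add: nonneg_supp_def delta0_def)
qed (simp add: nonneg_supp_conv)

lemma fps_of_conv_pow: "nonneg_supp G \<Longrightarrow> fps_of (conv_pow G n) = fps_of G ^ n"
proof (induction n)
  case 0
  show ?case by (rule fps_ext) (simp add: delta0_def)
qed (simp add: fps_of_conv nonneg_supp_conv_pow)

lemma has_sum_nonneg_supp_iff:
  assumes "nonneg_supp F"
  shows "(F has_sum s) UNIV \<longleftrightarrow> ((\<lambda>n. F (int n)) has_sum s) UNIV"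
proof -
  have "(F has_sum s) UNIV \<longleftrightarrow> (F has_sum s) (range int)"
  proof (rule has_sum_cong_neutral)
    fix x assume "x \<in> UNIV - range int"
    then have "x < 0" by (metis DiffE nonneg_int_cases not_le rangeI)
    then show "F x = 0" using assms unfolding nonneg_supp_def by auto
  qed auto
  also have "\<dots> \<longleftrightarrow> ((F \<circ> int) has_sum s) UNIV"
    by (rule has_sum_reindex) simp
  finally show ?thesis by (simp add: o_def)
qed

lemma PZ_iff: "F \<in> PZ \<longleftrightarrow> nonneg_supp F \<and> prob_fps (fps_of F)"
proof
  assume F: "F \<in> PZ"
  then have supp: "nonneg_supp F" unfolding PZ_def nonneg_supp_def by auto
  then have "(\<lambda>n. F (int n)) sums 1"
    using F has_sum_nonneg_supp_iff[OF supp] unfolding PZ_def by (auto intro: has_sum_imp_sums)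
  then show "nonneg_supp F \<and> prob_fps (fps_of F)"
    using F supp unfolding PZ_def prob_fps_def fps_nth_fps_of_eq by auto
next
  assume F: "nonneg_supp F \<and> prob_fps (fps_of F)"
  then have "((\<lambda>n. F (int n)) has_sum 1) UNIV"
    unfolding prob_fps_def fps_nth_fps_of_eq by (intro sums_nonneg_imp_has_sum) auto
  then have "(F has_sum 1) UNIV" using has_sum_nonneg_supp_iff F by blast
  moreover have "0 \<le> F k \<and> F k \<le> 1" for k
  proof (cases "k < 0")
    case False
    then obtain n where "k = int n" by (metis nonneg_int_cases not_less)
    then show ?thesis using F prob_fps_nth_le_1[of "fps_of F" n] unfolding prob_fps_def by simp
  qed (use F in \<open>simp add: nonneg_supp_def\<close>)
  ultimately show "F \<in> PZ" using F unfolding PZ_def nonneg_supp_def by auto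
qed

lemma infsum_abs_eq_l1_norm:
  assumes "nonneg_supp D" "l1_fps (fps_of D)"
  shows "(\<Sum>\<^sub>\<infinity>k\<in>UNIV. \<bar>D k\<bar>) = l1_norm (fps_of D)"
proof -
  have "(\<lambda>n. \<bar>D (int n)\<bar>) sums l1_norm (fps_of D)"
    using assms(2) unfolding l1_fps_def l1_norm_def by (simp add: summable_sums)
  then have "((\<lambda>n. \<bar>D (int n)\<bar>) has_sum l1_norm (fps_of D)) UNIV"
    by (rule sums_nonneg_imp_has_sum) simp
  then have "((\<lambda>k. \<bar>D k\<bar>) has_sum l1_norm (fps_of D)) UNIV"
    using has_sum_nonneg_supp_iff[of "\<lambda>k. \<bar>D k\<bar>"] assms(1) unfolding nonneg_supp_def by simp
  then show ?thesis by (rule infsumI)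
qed

lemma classA_iff: "F \<in> classA \<longleftrightarrow> nonneg_supp F \<and> classA_fps (fps_of F)"
proof -
  have "(\<Sum>\<^sub>\<infinity>k\<in>UNIV. \<bar>conv_pow F n k - conv_pow F (Suc n) k\<bar>)
      = l1_norm (fps_of F ^ n - fps_of F ^ Suc n)"
    if supp: "nonneg_supp F" and prob: "prob_fps (fps_of F)" for n
  proof -
    have "fps_of (\<lambda>k. conv_pow F n k - conv_pow F (Suc n) k)
        = fps_of (conv_pow F n) - fps_of (conv_pow F (Suc n))"
      by (rule fps_ext) simp
    also have "\<dots> = fps_of F ^ n - fps_of F ^ Suc n"
      by (simp only: fps_of_conv_pow[OF supp])
    finally have "fps_of (\<lambda>k. conv_pow F n k - conv_pow F (Suc n) k) = fps_of F ^ n - fps_of F ^ Suc n" .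
    moreover have "nonneg_supp (\<lambda>k. conv_pow F n k - conv_pow F (Suc n) k)"
      using nonneg_supp_conv_pow[OF supp, of n] nonneg_supp_conv_pow[OF supp, of "Suc n"]
      unfolding nonneg_supp_def by simp
    ultimately show ?thesis
      using infsum_abs_eq_l1_norm l1_fps_power_diff[OF prob, of n] by metis
  qed
  then show ?thesis unfolding classA_def classA_fps_def PZ_iff by (intro iffI; clarsimp)
qed

lemma classA_convex:
  assumes "F1 \<in> classA" "F2 \<in> classA" "0 \<le> t" "t \<le> 1"
  shows "(\<lambda>k. t * F1 k + (1 - t) * F2 k) \<in> classA"
proof -
  have "fps_of (\<lambda>k. t * F1 k + (1 - t) * F2 k) = fps_const t * fps_of F1 + fps_const (1 - t) * fps_of F2"
    by (rule fps_ext) simp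
  moreover have "classA_fps (fps_const t * fps_of F1 + fps_const (1 - t) * fps_of F2)"
    using assms by (intro classA_fps_convex) (auto simp: classA_iff)
  moreover have "nonneg_supp (\<lambda>k. t * F1 k + (1 - t) * F2 k)"
    using assms unfolding classA_iff nonneg_supp_def by simp
  ultimately show ?thesis unfolding classA_iff by simp
qed

lemma classA_conv:
  assumes "F1 \<in> classA" "F2 \<in> classA"
  shows "F1 \<star> F2 \<in> classA"
  using assms classA_fps_mult[of "fps_of F1" "fps_of F2"]
  unfolding classA_iff by (simp add: nonneg_supp_conv fps_of_conv)

lemma fps_of_subordination:
  assumes F: "F \<in> PZ" and G: "G \<in> PZ"
  shows "fps_of (\<lambda>m. \<Sum>\<^sub>\<infinity>k\<in>UNIV. F (int k) * conv_pow G k m) = fps_subord (fps_of G) (fps_of F)"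
proof (rule fps_ext)
  fix n
  have f: "prob_fps (fps_of F)" and g: "nonneg_supp G" "prob_fps (fps_of G)"
    using F G unfolding PZ_iff by auto
  have summand: "F (int k) * conv_pow G k (int n) = fps_nth (fps_of F) k * fps_nth (fps_of G ^ k) n" for k
    using fps_of_conv_pow[OF g(1), of k] by (metis fps_nth_fps_of)
  have "(\<lambda>k. fps_nth (fps_of F) k * fps_nth (fps_of G ^ k) n) sums fps_nth (fps_subord (fps_of G) (fps_of F)) n"
    unfolding fps_subord_nth
    by (rule summable_sums[OF summable_rabs_cancel[OF fps_subord_summable[OF g(2) prob_fps_l1[OF f]]]])
  then have "((\<lambda>k. fps_nth (fps_of F) k * fps_nth (fps_of G ^ k) n)
      has_sum fps_nth (fps_subord (fps_of G) (fps_of F)) n) UNIV"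
    using f prob_fps_power_nth_bounds[OF g(2)] unfolding prob_fps_def
    by (intro sums_nonneg_imp_has_sum) auto
  then show "fps_nth (fps_of (\<lambda>m. \<Sum>\<^sub>\<infinity>k\<in>UNIV. F (int k) * conv_pow G k m)) n
      = fps_nth (fps_subord (fps_of G) (fps_of F)) n"
    unfolding fps_nth_fps_of summand by (rule infsumI)
qed

lemma classA_subordination:
  assumes F: "F \<in> classA" and G: "G \<in> PZ"
  shows "(\<lambda>m. \<Sum>\<^sub>\<infinity>k\<in>UNIV. F (int k) * conv_pow G k m) \<in> classA"
proof -
  have "nonneg_supp (\<lambda>m. \<Sum>\<^sub>\<infinity>k\<in>UNIV. F (int k) * conv_pow G k m)"
    using nonneg_supp_conv_pow[of G] G unfolding PZ_iff nonneg_supp_def by simp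
  moreover have "classA_fps (fps_subord (fps_of G) (fps_of F))"
    using F G by (intro classA_fps_subord) (auto simp: classA_iff PZ_iff)
  moreover have "F \<in> PZ" using F by (simp add: classA_def)
  ultimately show ?thesis unfolding classA_iff using G by (simp add: fps_of_subordination)
qed

theorem proposition4p2:
  shows "classA \<subseteq> PZ
    \<and> (\<forall>F1\<in>classA. \<forall>F2\<in>classA. \<forall>t::real. 0 \<le> t \<and> t \<le> 1 \<longrightarrow>
           (\<lambda>k. t * F1 k + (1 - t) * F2 k) \<in> classA)
    \<and> (\<forall>F1\<in>classA. \<forall>F2\<in>classA. F1 \<star> F2 \<in> classA)
    \<and> (\<forall>F1\<in>classA. \<forall>G\<in>PZ.
           (\<lambda>m. \<Sum>\<^sub>\<infinity>k\<in>UNIV. F1 (int k) * conv_pow G k m) \<in> classA)"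
  using classA_convex classA_conv classA_subordination by (auto simp: classA_def)

end
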